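(* Let $1<p<\infty$, let $\alpha\in SOS(\mathbb{R}_+)$, and let $\omega$ be its exponent function, i.e. $\alpha(t)=te^{\omega(t)}$. Then the function $\mathfrak c(t,x):=e^{i\omega(t)(x+i/p)}r_p(x)$, $(t,x)\in\mathbb{R}_+\times\mathbb{R}$, belongs to $C_b(\mathbb{R}_+,V(\mathbb{R}))$.
   Context: $\mathbb{R}_+=(0,\infty)$. $SO(\mathbb{R}_+)$: bounded continuous complex $f$ on $\mathbb{R}_+$ with $\lim_{r\to s}\sup\{|f(t)-f(\tau)|:t,\tau\in[\lambda r,r]\}=0$ for $s\in\{0,\infty\}$ and each (equivalently some) $\lambda\in(0,1)$. $SOS(\mathbb{R}_+)$: orientation-preserving diffeomorphisms $\alpha$ of $\mathbb{R}_+$ onto itself with no fixed points in $\mathbb{R}_+$ such that $\log\alpha'$ is bounded continuous and $\alpha'\in SO(\mathbb{R}_+)$; for such $\alpha$ the exponent function $\omega(t)=\log[\alpha(t)/t]$ is real-valued and lies in $SO(\mathbb{R}_+)$. $r_p(x)=1/\sinh[\pi(x+i/p)]$. $V(\mathbb{R})$ is the Banach algebra of absolutely continuous functions of finite total variation on $\mathbb{R}$ with norm $\|a\|_V=\|a\|_{L^\infty(\mathbb{R})}+\int_{\mathbb{R}}|a'(x)|dx$; $C_b(\mathbb{R}_+,V(\mathbb{R}))$ is the Banach algebra of bounded continuous maps $t\mapsto\mathfrak a(t,\cdot)$ from $\mathbb{R}_+$ to $V(\mathbb{R})$ with norm $\sup_t\|\mathfrak a(t,\cdot)\|_V$. *)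

theory Defs
  imports "HOL-Analysis.Analysis"
begin

definition osc :: "(real \<Rightarrow> complex) \<Rightarrow> real \<Rightarrow> real \<Rightarrow> real" where
  "osc f l r = Sup {norm (f t - f \<tau>) | t \<tau>. t \<in> {l * r..r} \<and> \<tau> \<in> {l * r..r}}"

definition SO :: "(real \<Rightarrow> complex) \<Rightarrow> bool" where
  "SO f \<longleftrightarrow> bounded (f ` {0<..}) \<and> continuous_on {0<..} f \<and>
     (\<forall>l. 0 < l \<and> l < 1 \<longrightarrow>
        ((osc f l \<longlongrightarrow> 0) (at_right 0)) \<and> ((osc f l \<longlongrightarrow> 0) at_top))"

definition C1_pos :: "(real \<Rightarrow> real) \<Rightarrow> bool" where
  "C1_pos f \<longleftrightarrow> (\<exists>d. (\<forall>t>0. (f has_real_derivative d t) (at t)) \<and> continuous_on {0<..} d)"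

definition diffeo_pos :: "(real \<Rightarrow> real) \<Rightarrow> bool" where
  "diffeo_pos a \<longleftrightarrow> bij_betw a {0<..} {0<..} \<and> C1_pos a \<and> C1_pos (inv_into {0<..} a)"

definition SOS :: "(real \<Rightarrow> real) \<Rightarrow> bool" where
  "SOS a \<longleftrightarrow> diffeo_pos a \<and> strict_mono_on {0<..} a \<and> (\<forall>t>0. a t \<noteq> t) \<and>
     (\<forall>t>0. deriv a t > 0) \<and>
     bounded ((\<lambda>t. ln (deriv a t)) ` {0<..}) \<and> continuous_on {0<..} (\<lambda>t. ln (deriv a t)) \<and>
     SO (\<lambda>t. complex_of_real (deriv a t))"

definition r_p :: "real \<Rightarrow> real \<Rightarrow> complex" where
  "r_p p x = 1 / sinh (complex_of_real pi * (complex_of_real x + \<i> / complex_of_real p))"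

definition abs_cont_on :: "(real \<Rightarrow> complex) \<Rightarrow> real \<Rightarrow> real \<Rightarrow> bool" where
  "abs_cont_on f u v \<longleftrightarrow> (\<forall>e>0. \<exists>d>0. \<forall>(n::nat) (a::nat \<Rightarrow> real) b.
      (\<forall>k<n. u \<le> a k \<and> a k \<le> b k \<and> b k \<le> v) \<and>
      (\<forall>j<n. \<forall>k<n. j \<noteq> k \<longrightarrow> b j \<le> a k \<or> b k \<le> a j) \<and>
      (\<Sum>k<n. b k - a k) < d \<longrightarrow> (\<Sum>k<n. norm (f (b k) - f (a k))) < e)"

definition variation_sums :: "(real \<Rightarrow> complex) \<Rightarrow> real set" where
  "variation_sums f = {(\<Sum>k<n. norm (f (x (Suc k)) - f (x k))) | n x. \<forall>k<n. x k < x (Suc k)}"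

definition finite_total_variation :: "(real \<Rightarrow> complex) \<Rightarrow> bool" where
  "finite_total_variation f \<longleftrightarrow> bdd_above (variation_sums f)"

definition in_V :: "(real \<Rightarrow> complex) \<Rightarrow> bool" where
  "in_V f \<longleftrightarrow> (\<forall>u v. u \<le> v \<longrightarrow> abs_cont_on f u v) \<and> finite_total_variation f"

text \<open>Norm of V(R): L-infinity norm (= sup norm, the functions being continuous) plus
  the L^1 norm of the (a.e.) derivative.\<close>
definition V_norm :: "(real \<Rightarrow> complex) \<Rightarrow> real" where
  "V_norm f = (SUP x. norm (f x)) + (\<integral>x. norm (vector_derivative f (at x)) \<partial>lebesgue)"

definition in_Cb_V :: "(real \<Rightarrow> real \<Rightarrow> complex) \<Rightarrow> bool" where
  "in_Cb_V c \<longleftrightarrow>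
     (\<forall>t>0. in_V (c t)) \<and>
     (\<forall>t>0. \<forall>e>0. \<exists>d>0. \<forall>s>0. \<bar>s - t\<bar> < d \<longrightarrow> V_norm (\<lambda>x. c s x - c t x) < e) \<and>
     (\<exists>M. \<forall>t>0. V_norm (c t) \<le> M)"

end

theory Submission
  imports Defs "HOL-Probability.Sinc_Integral"
begin

text \<open>Write \<open>c\<^sub>w(x) = exp(i w (x + i/p)) r\<^sub>p(x)\<close>. Since \<open>sinh(\<pi> (x + i/p))\<close> stays away from 0 and
  grows like \<open>exp(\<pi> |x|)\<close>, both \<open>r\<^sub>p\<close> and \<open>r\<^sub>p'\<close> decay like \<open>exp(-\<pi> |x|)\<close>. Hence, uniformly
  for \<open>|w| \<le> W\<close>, \<open>c\<^sub>w\<close> is bounded and \<open>c\<^sub>w'\<close> is dominated by some \<open>K / (1 + x\<^sup>2)\<close>. Such a function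
  lies in \<open>V(\<real>)\<close>, because \<open>K arctan\<close> majorizes its increments, and its norm is at most
  \<open>sup |c\<^sub>w| + \<pi> K\<close>. As \<open>|exp(i w\<^sub>1 \<zeta>) - exp(i w\<^sub>2 \<zeta>)| \<le> |w\<^sub>1 - w\<^sub>2| (1 + |x|) exp W\<close> for
  \<open>\<zeta> = x + i/p\<close>, the same estimates applied to \<open>c\<^sub>w\<^sub>1 - c\<^sub>w\<^sub>2\<close> make \<open>w \<mapsto> c\<^sub>w\<close> Lipschitz into
  \<open>V(\<real>)\<close> on bounded sets. Finally \<open>\<alpha>'\<close> lies between two positive constants, hence so does
  \<open>\<alpha>(t)/t\<close>, and the exponent \<open>\<omega>\<close> is a bounded continuous function; composing gives the claim.\<close>

lemma norm_diff_le_of_derivative_majorant: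
  fixes f f' :: "real \<Rightarrow> 'a::banach" and g g' :: "real \<Rightarrow> real"
  assumes "a \<le> b"
    and "\<And>x. x \<in> {a..b} \<Longrightarrow> (f has_vector_derivative f' x) (at x)"
    and "\<And>x. x \<in> {a..b} \<Longrightarrow> (g has_real_derivative g' x) (at x)"
    and "\<And>x. x \<in> {a..b} \<Longrightarrow> norm (f' x) \<le> g' x"
  shows "norm (f b - f a) \<le> g b - g a"
proof (cases "a = b")
  case False
  with \<open>a \<le> b\<close> have "a < b" by simp
  then show ?thesis
  proof (rule differentiable_bound_general)
    show "continuous_on {a..b} f"
      using assms(2) has_vector_derivative_continuous by (blast intro: continuous_at_imp_continuous_on)
    show "continuous_on {a..b} g"
      using assms(3) DERIV_isCont by (blast intro: continuous_at_imp_continuous_on)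
    show "\<And>x. a < x \<Longrightarrow> x < b \<Longrightarrow> (g has_vector_derivative g' x) (at x)"
      using assms(3) has_real_derivative_iff_has_vector_derivative by auto
    show "\<And>x. a < x \<Longrightarrow> x < b \<Longrightarrow> (f has_vector_derivative f' x) (at x)"
      and "\<And>x. a < x \<Longrightarrow> x < b \<Longrightarrow> norm (f' x) \<le> g' x"
      using assms(2,4) by auto
  qed
qed simp

lemma abs_cont_on_if_Lipschitz:
  assumes L: "0 \<le> L" and lip: "\<And>a b. a \<le> b \<Longrightarrow> norm (f b - f a) \<le> L * (b - a)"
  shows "abs_cont_on f u v"
  unfolding abs_cont_on_def
proof (intro allI impI)
  fix e :: real assume "e > 0"
  show "\<exists>d>0. \<forall>(n::nat) (a::nat \<Rightarrow> real) b.
      (\<forall>k<n. u \<le> a k \<and> a k \<le> b k \<and> b k \<le> v) \<and>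
      (\<forall>j<n. \<forall>k<n. j \<noteq> k \<longrightarrow> b j \<le> a k \<or> b k \<le> a j) \<and>
      (\<Sum>k<n. b k - a k) < d \<longrightarrow> (\<Sum>k<n. norm (f (b k) - f (a k))) < e"
  proof (intro exI[of _ "e / (L + 1)"] conjI allI impI)
    show "0 < e / (L + 1)" using \<open>e > 0\<close> L by simp
    fix n :: nat and a b :: "nat \<Rightarrow> real"
    assume h: "(\<forall>k<n. u \<le> a k \<and> a k \<le> b k \<and> b k \<le> v) \<and>
      (\<forall>j<n. \<forall>k<n. j \<noteq> k \<longrightarrow> b j \<le> a k \<or> b k \<le> a j) \<and>
      (\<Sum>k<n. b k - a k) < e / (L + 1)"
    have "(\<Sum>k<n. norm (f (b k) - f (a k))) \<le> (\<Sum>k<n. (L + 1) * (b k - a k))"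
    proof (rule sum_mono)
      fix k assume "k \<in> {..<n}"
      with h have "a k \<le> b k" by auto
      with lip[OF this] show "norm (f (b k) - f (a k)) \<le> (L + 1) * (b k - a k)"
        by (simp add: algebra_simps)
    qed
    also have "\<dots> = (L + 1) * (\<Sum>k<n. b k - a k)" by (simp add: sum_distrib_left)
    also have "\<dots> < (L + 1) * (e / (L + 1))"
      using h L by (intro mult_strict_left_mono) auto
    also have "\<dots> = e" using L by simp
    finally show "(\<Sum>k<n. norm (f (b k) - f (a k))) < e" .
  qed
qed

lemma finite_total_variation_if_bounded_majorant:
  assumes maj: "\<And>a b. a \<le> b \<Longrightarrow> norm (f b - f a) \<le> g b - g a"
    and bnd: "\<And>x. \<bar>g x\<bar> \<le> M"
  shows "finite_total_variation f"
  unfolding finite_total_variation_def variation_sums_def bdd_above_def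
proof (intro exI[of _ "2 * M"] ballI)
  fix z assume "z \<in> {\<Sum>k<n. norm (f (x (Suc k)) - f (x k)) |n x. \<forall>k<n. x k < x (Suc k)}"
  then obtain n x where z: "z = (\<Sum>k<n. norm (f (x (Suc k)) - f (x k)))"
    and mono: "\<forall>k<n. x k < x (Suc k)" by blast
  have "z \<le> (\<Sum>k<n. g (x (Suc k)) - g (x k))"
    unfolding z using mono by (intro sum_mono maj) (auto intro: less_imp_le)
  also have "\<dots> = g (x n) - g (x 0)" by (rule sum_lessThan_telescope)
  also have "\<dots> \<le> 2 * M" using bnd[of "x n"] bnd[of "x 0"] by linarith
  finally show "z \<le> 2 * M" .
qed

lemma
  shows integrable_lebesgue_inverse_1_plus_square: "integrable lebesgue (\<lambda>x::real. inverse (1 + x\<^sup>2))"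
    and integral_lebesgue_inverse_1_plus_square: "(\<integral>x. inverse (1 + x\<^sup>2) \<partial>lebesgue) = (pi :: real)"
proof -
  have "integrable lborel (\<lambda>x::real. inverse (1 + x\<^sup>2))"
    and "(\<integral>x. inverse (1 + x\<^sup>2) \<partial>lborel) = (pi :: real)"
    using integrable_inverse_1_plus_square LBINT_inverse_1_plus_square
    by (simp_all add: set_integrable_def set_lebesgue_integral_def interval_lebesgue_integral_def)
  then show "integrable lebesgue (\<lambda>x::real. inverse (1 + x\<^sup>2))"
    and "(\<integral>x. inverse (1 + x\<^sup>2) \<partial>lebesgue) = (pi :: real)"
    by (simp_all add: integrable_completion integral_completion)
qed

lemma inverse_1_plus_square_le_1: "inverse (1 + (x::real)\<^sup>2) \<le> 1"
  by (simp add: inverse_le_1_iff)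

lemma in_V_if_derivative_decay:
  fixes f f' :: "real \<Rightarrow> complex"
  assumes der: "\<And>x. (f has_vector_derivative f' x) (at x)"
    and decay: "\<And>x. norm (f' x) \<le> K * inverse (1 + x\<^sup>2)"
  shows "in_V f"
proof -
  have K: "0 \<le> K" using order_trans[OF norm_ge_zero decay[of 0]] by simp
  have "abs_cont_on f u v" for u v
  proof (rule abs_cont_on_if_Lipschitz[OF K])
    fix a b :: real assume "a \<le> b"
    have "norm (f b - f a) \<le> K * b - K * a"
    proof (rule norm_diff_le_of_derivative_majorant[OF \<open>a \<le> b\<close> der])
      show "((*) K has_real_derivative K) (at x)" for x
        by (auto intro!: derivative_eq_intros)
      show "norm (f' x) \<le> K" for x
        using decay[of x] mult_left_mono[OF inverse_1_plus_square_le_1[of x] K] by linarith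
    qed
    then show "norm (f b - f a) \<le> K * (b - a)" by (simp add: algebra_simps)
  qed
  moreover have "finite_total_variation f"
  proof (rule finite_total_variation_if_bounded_majorant)
    show "norm (f b - f a) \<le> K * arctan b - K * arctan a" if "a \<le> b" for a b
    proof (rule norm_diff_le_of_derivative_majorant[OF that der])
      show "((\<lambda>x. K * arctan x) has_real_derivative K * inverse (1 + x\<^sup>2)) (at x)" for x
        by (auto intro!: derivative_eq_intros DERIV_arctan)
    qed (rule decay)
    show "\<bar>K * arctan x\<bar> \<le> K * (pi / 2)" for x
    proof -
      have "\<bar>arctan x\<bar> \<le> pi / 2" using arctan_bounded[of x] by linarith
      from mult_left_mono[OF this K] show ?thesis by (simp add: abs_mult K)
    qed
  qed
  ultimately show "in_V f" by (simp add: in_V_def)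
qed

lemma V_norm_le_if_derivative_decay:
  fixes f f' :: "real \<Rightarrow> complex"
  assumes der: "\<And>x. (f has_vector_derivative f' x) (at x)"
    and cont: "continuous_on UNIV f'"
    and decay: "\<And>x. norm (f' x) \<le> K * inverse (1 + x\<^sup>2)"
    and bnd: "\<And>x. norm (f x) \<le> B"
  shows "V_norm f \<le> B + pi * K"
proof -
  have K: "0 \<le> K" using order_trans[OF norm_ge_zero decay[of 0]] by simp
  have int_decay: "integrable lebesgue (\<lambda>x. K * inverse (1 + x\<^sup>2))"
    using integrable_lebesgue_inverse_1_plus_square by simp
  have "(\<integral>x. norm (vector_derivative f (at x)) \<partial>lebesgue) = (\<integral>x. norm (f' x) \<partial>lebesgue)"
    using der vector_derivative_at by metis
  also have "\<dots> \<le> (\<integral>x. K * inverse (1 + x\<^sup>2) \<partial>lebesgue)"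
  proof (rule integral_mono)
    have "(\<lambda>x. norm (f' x)) \<in> borel_measurable lebesgue"
      using cont by (intro borel_measurable_continuous_on[where f="\<lambda>x. norm (f' x)"] measurable_completion)
        (auto intro!: continuous_intros)
    with int_decay show "integrable lebesgue (\<lambda>x. norm (f' x))"
      by (rule Bochner_Integration.integrable_bound) (use decay K in \<open>auto intro: order_trans\<close>)
  qed (use int_decay decay in auto)
  also have "\<dots> = pi * K" by (simp add: integral_lebesgue_inverse_1_plus_square)
  finally have "(\<integral>x. norm (vector_derivative f (at x)) \<partial>lebesgue) \<le> pi * K" .
  moreover have "(SUP x. norm (f x)) \<le> B" by (rule cSUP_least) (use bnd in auto)
  ultimately show ?thesis by (simp add: V_norm_def)
qed

lemma in_Cb_V_compose:
  fixes k :: "real \<Rightarrow> real \<Rightarrow> complex" and \<omega> :: "real \<Rightarrow> real"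
  assumes bounded: "\<And>t. 0 < t \<Longrightarrow> \<bar>\<omega> t\<bar> \<le> W"
    and cont: "continuous_on {0<..} \<omega>"
    and in_V: "\<And>w. \<bar>w\<bar> \<le> W \<Longrightarrow> in_V (k w)"
    and V_norm_le: "\<And>w. \<bar>w\<bar> \<le> W \<Longrightarrow> V_norm (k w) \<le> M"
    and Lipschitz: "\<And>w1 w2. \<bar>w1\<bar> \<le> W \<Longrightarrow> \<bar>w2\<bar> \<le> W \<Longrightarrow>
      V_norm (\<lambda>x. k w1 x - k w2 x) \<le> L * \<bar>w1 - w2\<bar>"
  shows "in_Cb_V (\<lambda>t. k (\<omega> t))"
  unfolding in_Cb_V_def
proof (intro conjI allI impI)
  show "in_V (k (\<omega> t))" if "0 < t" for t
    using in_V bounded that by blast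
  show "\<exists>M. \<forall>t>0. V_norm (k (\<omega> t)) \<le> M"
    using V_norm_le bounded by blast
next
  fix t e :: real assume t: "0 < t" and e: "0 < e"
  have "isCont \<omega> t"
    using cont t by (simp add: continuous_on_eq_continuous_at)
  moreover have "0 < e / (\<bar>L\<bar> + 1)" using e by simp
  ultimately obtain d where d: "0 < d"
    and close: "\<And>s. dist s t < d \<Longrightarrow> dist (\<omega> s) (\<omega> t) < e / (\<bar>L\<bar> + 1)"
    unfolding continuous_at_eps_delta by blast
  show "\<exists>d>0. \<forall>s>0. \<bar>s - t\<bar> < d \<longrightarrow> V_norm (\<lambda>x. k (\<omega> s) x - k (\<omega> t) x) < e"
  proof (intro exI[of _ d] conjI allI impI d)
    fix s assume s: "0 < s" and "\<bar>s - t\<bar> < d"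
    with close have "\<bar>\<omega> s - \<omega> t\<bar> < e / (\<bar>L\<bar> + 1)" by (simp add: dist_real_def)
    have "V_norm (\<lambda>x. k (\<omega> s) x - k (\<omega> t) x) \<le> L * \<bar>\<omega> s - \<omega> t\<bar>"
      using Lipschitz bounded s t by blast
    also have "\<dots> \<le> (\<bar>L\<bar> + 1) * \<bar>\<omega> s - \<omega> t\<bar>"
      by (intro mult_right_mono) auto
    also have "\<dots> < (\<bar>L\<bar> + 1) * (e / (\<bar>L\<bar> + 1))"
      using \<open>\<bar>\<omega> s - \<omega> t\<bar> < e / (\<bar>L\<bar> + 1)\<close> by (intro mult_strict_left_mono) auto
    also have "\<dots> = e" by simp
    finally show "V_norm (\<lambda>x. k (\<omega> s) x - k (\<omega> t) x) < e" .
  qed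
qed

section \<open>Products with the factor \<open>exp(i w (x + i/p))\<close>\<close>

definition e_p :: "real \<Rightarrow> real \<Rightarrow> real \<Rightarrow> complex" where
  "e_p p w x = exp (\<i> * complex_of_real w * (complex_of_real x + \<i> / complex_of_real p))"

lemma norm_e_p_le:
  assumes "1 \<le> p" and "\<bar>w\<bar> \<le> W"
  shows "norm (e_p p w x) \<le> exp W"
proof -
  have "\<bar>w / p\<bar> \<le> \<bar>w\<bar>"
    using assms(1) by (simp add: abs_divide divide_le_eq mult_le_cancel_left1)
  then have "- w / p \<le> W" using assms(2) by linarith
  then show ?thesis by (simp add: e_p_def norm_exp_eq_Re Re_divide)
qed

lemma e_p_has_derivative_in_x:
  "(e_p p w has_vector_derivative \<i> * complex_of_real w * e_p p w x) (at x)"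
proof -
  have "((\<lambda>z. exp (\<i> * complex_of_real w * (z + \<i> / complex_of_real p)))
      has_field_derivative \<i> * complex_of_real w * e_p p w x) (at (complex_of_real x))"
    by (auto intro!: derivative_eq_intros simp: e_p_def)
  from has_vector_derivative_real_field[OF this] show ?thesis by (simp add: e_p_def[abs_def])
qed

lemma continuous_on_e_p: "continuous_on UNIV (e_p p w)"
  using e_p_has_derivative_in_x
  by (blast intro: continuous_at_imp_continuous_on has_vector_derivative_continuous)

lemma e_p_has_derivative_in_w:
  "((\<lambda>w. e_p p w x) has_vector_derivative
     \<i> * (complex_of_real x + \<i> / complex_of_real p) * e_p p w x) (at w)"
proof -
  have "((\<lambda>z. exp (\<i> * z * (complex_of_real x + \<i> / complex_of_real p)))
      has_field_derivative \<i> * (complex_of_real x + \<i> / complex_of_real p) * e_p p w x)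
      (at (complex_of_real w))"
    by (auto intro!: derivative_eq_intros simp: e_p_def)
  from has_vector_derivative_real_field[OF this] show ?thesis by (simp add: e_p_def)
qed

lemma e_p_Lipschitz_in_w:
  assumes p: "1 \<le> p" and "\<bar>w1\<bar> \<le> W" and "\<bar>w2\<bar> \<le> W"
  shows "norm (e_p p w1 x - e_p p w2 x) \<le> \<bar>w1 - w2\<bar> * ((1 + \<bar>x\<bar>) * exp W)"
proof -
  have "norm (e_p p b x - e_p p a x) \<le> (1 + \<bar>x\<bar>) * exp W * b - (1 + \<bar>x\<bar>) * exp W * a"
    if ab: "a \<le> b" "\<bar>a\<bar> \<le> W" "\<bar>b\<bar> \<le> W" for a b
  proof (rule norm_diff_le_of_derivative_majorant[OF \<open>a \<le> b\<close> e_p_has_derivative_in_w])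
    show "((\<lambda>w. (1 + \<bar>x\<bar>) * exp W * w) has_real_derivative (1 + \<bar>x\<bar>) * exp W) (at w)" for w
      by (auto intro!: derivative_eq_intros)
    fix w assume "w \<in> {a..b}"
    with ab have "\<bar>w\<bar> \<le> W" by auto
    have "norm (\<i> / complex_of_real p) \<le> 1"
      using p by (simp add: norm_divide)
    then have "norm (complex_of_real x + \<i> / complex_of_real p) \<le> 1 + \<bar>x\<bar>"
      using norm_triangle_ineq[of "complex_of_real x" "\<i> / complex_of_real p"] by simp
    with norm_e_p_le[OF p \<open>\<bar>w\<bar> \<le> W\<close>]
    show "norm (\<i> * (complex_of_real x + \<i> / complex_of_real p) * e_p p w x) \<le> (1 + \<bar>x\<bar>) * exp W"
      by (simp add: norm_mult mult_mono)
  qed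
  from this[of w1 w2] this[of w2 w1] assms show ?thesis
    by (cases "w1 \<le> w2") (simp_all add: norm_minus_commute algebra_simps)
qed

lemma e_p_mult_has_derivative:
  assumes "(r has_vector_derivative r' x) (at x)"
  shows "((\<lambda>x. e_p p w x * r x) has_vector_derivative
    e_p p w x * (\<i> * complex_of_real w * r x + r' x)) (at x)"
  using has_vector_derivative_mult[OF e_p_has_derivative_in_x assms]
  by (simp add: algebra_simps)

text \<open>The weight \<open>1 + |x|\<close> pays for the factor \<open>1 + |x|\<close> in the Lipschitz bound of \<open>w \<mapsto> e_p p w x\<close>.\<close>

definition decay_bound :: "real \<Rightarrow> (real \<Rightarrow> complex) \<Rightarrow> bool" where
  "decay_bound A r \<longleftrightarrow> (\<forall>x. (1 + \<bar>x\<bar>) * norm (r x) \<le> A * inverse (1 + x\<^sup>2))"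

lemma decay_boundD:
  assumes "decay_bound A r"
  shows "(1 + \<bar>x\<bar>) * norm (r x) \<le> A * inverse (1 + x\<^sup>2)"
    and "(1 + \<bar>x\<bar>) * norm (r x) \<le> A"
    and "norm (r x) \<le> A * inverse (1 + x\<^sup>2)"
    and "norm (r x) \<le> A"
proof -
  show weighted: "(1 + \<bar>x\<bar>) * norm (r x) \<le> A * inverse (1 + x\<^sup>2)" for x
    using assms by (simp add: decay_bound_def)
  have A: "0 \<le> A"
    using order_trans[OF _ weighted[of 0]] by (simp add: zero_le_mult_iff)
  have le_weighted: "norm (r x) \<le> (1 + \<bar>x\<bar>) * norm (r x)"
    using mult_right_mono[of 1 "1 + \<bar>x\<bar>" "norm (r x)"] by simp
  have "A * inverse (1 + x\<^sup>2) \<le> A"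
    using mult_left_mono[OF inverse_1_plus_square_le_1[of x] A] by simp
  with weighted[of x] le_weighted
  show "(1 + \<bar>x\<bar>) * norm (r x) \<le> A" and "norm (r x) \<le> A * inverse (1 + x\<^sup>2)" and "norm (r x) \<le> A"
    by linarith+
qed

lemma
  fixes r r' :: "real \<Rightarrow> complex"
  assumes p: "1 \<le> p" and w: "\<bar>w\<bar> \<le> W"
    and der: "\<And>x. (r has_vector_derivative r' x) (at x)" and cont: "continuous_on UNIV r'"
    and r: "decay_bound A r" and r': "decay_bound A r'"
  shows in_V_e_p_mult: "in_V (\<lambda>x. e_p p w x * r x)"
    and V_norm_e_p_mult_le: "V_norm (\<lambda>x. e_p p w x * r x) \<le> exp W * A + pi * (exp W * (W + 1) * A)"
proof -
  have W: "0 \<le> W" using w by linarith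
  have derivative_decay: "norm (e_p p w x * (\<i> * complex_of_real w * r x + r' x))
      \<le> exp W * (W + 1) * A * inverse (1 + x\<^sup>2)" for x
  proof -
    have "norm (\<i> * complex_of_real w * r x + r' x) \<le> W * (A * inverse (1 + x\<^sup>2)) + A * inverse (1 + x\<^sup>2)"
      using norm_triangle_ineq[of "\<i> * complex_of_real w * r x" "r' x"]
        mult_mono[OF w decay_boundD(3)[OF r, of x] W] decay_boundD(3)[OF r', of x]
      by (simp add: norm_mult)
    from mult_mono[OF norm_e_p_le[OF p w, of x] this] show ?thesis
      unfolding norm_mult by (simp add: algebra_simps)
  qed
  have derivative: "((\<lambda>x. e_p p w x * r x) has_vector_derivative
      e_p p w x * (\<i> * complex_of_real w * r x + r' x)) (at x)" for x
    by (rule e_p_mult_has_derivative[OF der])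
  from derivative derivative_decay
  show "in_V (\<lambda>x. e_p p w x * r x)" by (rule in_V_if_derivative_decay)
  have "continuous_on UNIV r"
    using der by (blast intro: continuous_at_imp_continuous_on has_vector_derivative_continuous)
  with continuous_on_e_p cont
  have "continuous_on UNIV (\<lambda>x. e_p p w x * (\<i> * complex_of_real w * r x + r' x))"
    by (intro continuous_intros)
  moreover have "norm (e_p p w x * r x) \<le> exp W * A" for x
    using norm_e_p_le[OF p w, of x] decay_boundD(4)[OF r, of x]
    unfolding norm_mult by (intro mult_mono) auto
  ultimately show "V_norm (\<lambda>x. e_p p w x * r x) \<le> exp W * A + pi * (exp W * (W + 1) * A)"
    using derivative derivative_decay by (intro V_norm_le_if_derivative_decay)
qed

lemma norm_e_p_mult_diff_le:
  assumes p: "1 \<le> p" and w1: "\<bar>w1\<bar> \<le> W" and w2: "\<bar>w2\<bar> \<le> W" and r: "decay_bound A r"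
  shows "norm (e_p p w1 x * r x - e_p p w2 x * r x) \<le> \<bar>w1 - w2\<bar> * exp W * A"
proof -
  have "norm ((e_p p w1 x - e_p p w2 x) * r x) \<le> \<bar>w1 - w2\<bar> * ((1 + \<bar>x\<bar>) * exp W) * norm (r x)"
    using e_p_Lipschitz_in_w[OF p w1 w2, of x] unfolding norm_mult
    by (rule mult_right_mono) simp
  also have "\<dots> = \<bar>w1 - w2\<bar> * exp W * ((1 + \<bar>x\<bar>) * norm (r x))" by (simp add: algebra_simps)
  also have "\<dots> \<le> \<bar>w1 - w2\<bar> * exp W * A"
    using decay_boundD(2)[OF r, of x] by (intro mult_left_mono) auto
  finally show ?thesis by (simp add: algebra_simps)
qed

lemma norm_e_p_mult_derivative_diff_le:
  fixes r r' :: "real \<Rightarrow> complex"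
  assumes p: "1 \<le> p" and w1: "\<bar>w1\<bar> \<le> W" and w2: "\<bar>w2\<bar> \<le> W"
    and r: "decay_bound A r" and r': "decay_bound A r'"
  shows "norm (e_p p w1 x * (\<i> * complex_of_real w1 * r x + r' x)
      - e_p p w2 x * (\<i> * complex_of_real w2 * r x + r' x))
    \<le> \<bar>w1 - w2\<bar> * exp W * (W + 2) * A * inverse (1 + x\<^sup>2)"
proof -
  define \<Delta> where "\<Delta> = \<bar>w1 - w2\<bar>"
  have \<Delta>: "0 \<le> \<Delta>" by (simp add: \<Delta>_def)
  have W: "0 \<le> W" using w1 by linarith
  have lip: "norm (e_p p w1 x - e_p p w2 x) \<le> \<Delta> * ((1 + \<bar>x\<bar>) * exp W)"
    using e_p_Lipschitz_in_w[OF p w1 w2] by (simp add: \<Delta>_def)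
  have "norm (\<i> * complex_of_real w1 * r x + r' x) \<le> W * norm (r x) + norm (r' x)"
    using norm_triangle_ineq[of "\<i> * complex_of_real w1 * r x" "r' x"]
      mult_right_mono[OF w1 norm_ge_zero[of "r x"]]
    by (simp add: norm_mult)
  with lip have first: "norm (e_p p w1 x - e_p p w2 x) * norm (\<i> * complex_of_real w1 * r x + r' x)
      \<le> \<Delta> * ((1 + \<bar>x\<bar>) * exp W) * (W * norm (r x) + norm (r' x))"
    by (rule mult_mono) (use \<Delta> in auto)
  have second: "norm (e_p p w2 x) * (\<Delta> * norm (r x)) \<le> exp W * (\<Delta> * norm (r x))"
    using norm_e_p_le[OF p w2, of x] \<Delta> by (simp add: mult_right_mono)
  have "e_p p w1 x * (\<i> * complex_of_real w1 * r x + r' x) - e_p p w2 x * (\<i> * complex_of_real w2 * r x + r' x)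
      = (e_p p w1 x - e_p p w2 x) * (\<i> * complex_of_real w1 * r x + r' x)
        + e_p p w2 x * (\<i> * complex_of_real (w1 - w2) * r x)"
    by (simp add: algebra_simps)
  also have "norm \<dots> \<le> \<Delta> * ((1 + \<bar>x\<bar>) * exp W) * (W * norm (r x) + norm (r' x))
      + exp W * (\<Delta> * norm (r x))"
    using first second
    by (intro order_trans[OF norm_triangle_ineq add_mono]) (simp_all only: norm_mult norm_of_real norm_ii \<Delta>_def)
  also have "\<dots> \<le> \<Delta> * exp W * ((W + 1) * ((1 + \<bar>x\<bar>) * norm (r x)) + (1 + \<bar>x\<bar>) * norm (r' x))"
    using \<Delta> by (simp add: algebra_simps mult_left_mono)
  also have "\<dots> \<le> \<Delta> * exp W * ((W + 1) * (A * inverse (1 + x\<^sup>2)) + A * inverse (1 + x\<^sup>2))"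
    using decay_boundD(1)[OF r, of x] decay_boundD(1)[OF r', of x] \<Delta> W
    by (intro mult_left_mono add_mono) auto
  finally show ?thesis by (simp add: \<Delta>_def algebra_simps)
qed

lemma V_norm_e_p_mult_diff_le:
  fixes r r' :: "real \<Rightarrow> complex"
  assumes p: "1 \<le> p" and w1: "\<bar>w1\<bar> \<le> W" and w2: "\<bar>w2\<bar> \<le> W"
    and der: "\<And>x. (r has_vector_derivative r' x) (at x)" and cont: "continuous_on UNIV r'"
    and r: "decay_bound A r" and r': "decay_bound A r'"
  shows "V_norm (\<lambda>x. e_p p w1 x * r x - e_p p w2 x * r x)
    \<le> exp W * A * (1 + pi * (W + 2)) * \<bar>w1 - w2\<bar>"
proof -
  have "((\<lambda>x. e_p p w1 x * r x - e_p p w2 x * r x) has_vector_derivative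
      e_p p w1 x * (\<i> * complex_of_real w1 * r x + r' x)
      - e_p p w2 x * (\<i> * complex_of_real w2 * r x + r' x)) (at x)" for x
    by (intro has_vector_derivative_diff e_p_mult_has_derivative der)
  moreover have "continuous_on UNIV r"
    using der by (blast intro: continuous_at_imp_continuous_on has_vector_derivative_continuous)
  with continuous_on_e_p cont
  have "continuous_on UNIV (\<lambda>x. e_p p w1 x * (\<i> * complex_of_real w1 * r x + r' x)
      - e_p p w2 x * (\<i> * complex_of_real w2 * r x + r' x))"
    by (intro continuous_intros)
  ultimately have "V_norm (\<lambda>x. e_p p w1 x * r x - e_p p w2 x * r x)
      \<le> \<bar>w1 - w2\<bar> * exp W * A + pi * (\<bar>w1 - w2\<bar> * exp W * (W + 2) * A)"
    using norm_e_p_mult_derivative_diff_le[OF p w1 w2 r r'] norm_e_p_mult_diff_le[OF p w1 w2 r]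
    by (rule V_norm_le_if_derivative_decay)
  then show ?thesis by (simp add: algebra_simps)
qed

section \<open>Decay of \<open>r\<^sub>p\<close> and its derivative\<close>

lemma norm_sinh_ge_sin_Im:
  fixes z :: complex
  assumes "0 \<le> sin (Im z)"
  shows "sin (Im z) \<le> norm (sinh z)"
proof -
  have "Im (sinh z) = cosh (Re z) * sin (Im z)"
    by (simp add: sinh_field_def cosh_def Im_exp algebra_simps)
  also have "\<dots> \<ge> sin (Im z)"
    using mult_right_mono[OF cosh_real_ge_1 assms] by simp
  finally show ?thesis using abs_Im_le_cmod[of "sinh z"] by linarith
qed

lemma norm_sinh_ge_exp_abs_Re:
  fixes z :: complex
  shows "(exp \<bar>Re z\<bar> - 1) / 2 \<le> norm (sinh z)"
proof -
  have "exp \<bar>Re z\<bar> - 1 \<le> \<bar>exp (Re z) - exp (- Re z)\<bar>"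
    by (cases "0 \<le> Re z") auto
  also have "\<dots> = \<bar>norm (exp z) - norm (exp (-z))\<bar>"
    by (simp add: norm_exp_eq_Re)
  also have "\<dots> \<le> norm (exp z - exp (-z))"
    by (rule norm_triangle_ineq3)
  finally show ?thesis by (simp add: sinh_field_def norm_divide)
qed

lemma norm_cosh_le_exp_abs_Re:
  fixes z :: complex
  shows "norm (cosh z) \<le> exp \<bar>Re z\<bar>"
proof -
  have "norm (exp z + exp (-z)) \<le> norm (exp z) + norm (exp (-z))" by (rule norm_triangle_ineq)
  also have "\<dots> = exp (Re z) + exp (- Re z)" by (simp add: norm_exp_eq_Re)
  also have "\<dots> \<le> 2 * exp \<bar>Re z\<bar>" by (cases "0 \<le> Re z") auto
  finally show ?thesis by (simp add: cosh_field_def norm_divide)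
qed

lemma norm_sinh_ge:
  fixes z :: complex
  assumes "0 < sin (Im z)"
  shows "min (sin (Im z) / 2) (1 / 4) * exp \<bar>Re z\<bar> \<le> norm (sinh z)"
proof (cases "2 \<le> exp \<bar>Re z\<bar>")
  case True
  have "min (sin (Im z) / 2) (1 / 4) * exp \<bar>Re z\<bar> \<le> 1 / 4 * exp \<bar>Re z\<bar>"
    by (intro mult_right_mono) auto
  also have "\<dots> \<le> (exp \<bar>Re z\<bar> - 1) / 2" using True by simp
  finally show ?thesis using norm_sinh_ge_exp_abs_Re[of z] by linarith
next
  case False
  then have "min (sin (Im z) / 2) (1 / 4) * exp \<bar>Re z\<bar> \<le> sin (Im z) / 2 * 2"
    using assms by (intro mult_mono) auto
  with norm_sinh_ge_sin_Im[of z] assms show ?thesis by simp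
qed

lemma exp_pi_abs_weight: "(1 + \<bar>x\<bar>) / exp (pi * \<bar>x\<bar>) \<le> 27 * inverse (1 + x\<^sup>2)"
proof -
  define y where "y = \<bar>x\<bar>"
  have y: "0 \<le> y" by (simp add: y_def)
  have "(1 + y) * (1 + y\<^sup>2) \<le> (1 + y) * (1 + y\<^sup>2) + (26 + 26 * y + 8 * y\<^sup>2)"
    using y by simp
  also have "\<dots> = 27 * (1 + y / 3) ^ 3"
    by (simp add: power2_eq_square power3_eq_cube field_simps)
  also have "\<dots> \<le> 27 * exp (y / 3) ^ 3"
    using y by (intro mult_left_mono power_mono exp_ge_add_one_self) auto
  also have "\<dots> = 27 * exp y" by (simp flip: exp_of_nat_mult)
  also have "\<dots> \<le> 27 * exp (pi * y)"
    using y pi_ge_two by (simp add: mult_le_cancel_right1)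
  finally have "(1 + y) * (1 + y\<^sup>2) \<le> 27 * exp (pi * y)" .
  then show ?thesis by (simp add: y_def field_simps add_pos_nonneg)
qed

lemma decay_bound_if_exp_decay:
  assumes "\<And>x. norm (r x) \<le> A / exp (pi * \<bar>x\<bar>)"
  shows "decay_bound (27 * A) r"
  unfolding decay_bound_def
proof
  fix x
  have A: "0 \<le> A" using order_trans[OF norm_ge_zero assms[of 0]] by simp
  have "(1 + \<bar>x\<bar>) * norm (r x) \<le> (1 + \<bar>x\<bar>) * (A / exp (pi * \<bar>x\<bar>))"
    using assms by (intro mult_left_mono) auto
  also have "\<dots> = A * ((1 + \<bar>x\<bar>) / exp (pi * \<bar>x\<bar>))" by simp
  also have "\<dots> \<le> A * (27 * inverse (1 + x\<^sup>2))"
    using exp_pi_abs_weight A by (rule mult_left_mono)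
  finally show "(1 + \<bar>x\<bar>) * norm (r x) \<le> 27 * A * inverse (1 + x\<^sup>2)" by simp
qed

definition sinh_bound_p :: "real \<Rightarrow> real" where
  "sinh_bound_p p = min (sin (pi / p) / 2) (1 / 4)"

lemma sinh_bound_p_pos: "1 < p \<Longrightarrow> 0 < sinh_bound_p p"
  by (auto intro!: sin_gt_zero simp: sinh_bound_p_def field_simps)

lemma norm_sinh_r_p_ge:
  assumes "1 < p"
  shows "sinh_bound_p p * exp (pi * \<bar>x\<bar>)
    \<le> norm (sinh (complex_of_real pi * (complex_of_real x + \<i> / complex_of_real p)))"
proof -
  have "p \<noteq> 0" and "0 < sin (pi / p)"
    using assms by (auto intro!: sin_gt_zero simp: field_simps)
  with norm_sinh_ge[of "complex_of_real pi * (complex_of_real x + \<i> / complex_of_real p)"]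
  show ?thesis by (simp add: sinh_bound_p_def Re_divide Im_divide power2_eq_square abs_mult)
qed

lemma sinh_r_p_nonzero:
  assumes "1 < p"
  shows "sinh (complex_of_real pi * (complex_of_real x + \<i> / complex_of_real p)) \<noteq> 0"
proof -
  have "0 < sinh_bound_p p * exp (pi * \<bar>x\<bar>)" using sinh_bound_p_pos[OF assms] by simp
  with norm_sinh_r_p_ge[OF assms, of x] show ?thesis by auto
qed

definition r_p_deriv :: "real \<Rightarrow> real \<Rightarrow> complex" where
  "r_p_deriv p x = - (complex_of_real pi * cosh (complex_of_real pi * (complex_of_real x + \<i> / complex_of_real p))
    / (sinh (complex_of_real pi * (complex_of_real x + \<i> / complex_of_real p)))\<^sup>2)"

lemma r_p_has_derivative:
  assumes "1 < p"
  shows "(r_p p has_vector_derivative r_p_deriv p x) (at x)"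
proof -
  have "((\<lambda>z. 1 / sinh (complex_of_real pi * (z + \<i> / complex_of_real p)))
      has_field_derivative r_p_deriv p x) (at (complex_of_real x))"
    using sinh_r_p_nonzero[OF assms, of x]
    by (auto intro!: derivative_eq_intros simp: r_p_deriv_def power2_eq_square field_simps)
  from has_vector_derivative_real_field[OF this] show ?thesis by (simp add: r_p_def[abs_def])
qed

lemma continuous_on_r_p_deriv: "1 < p \<Longrightarrow> continuous_on UNIV (r_p_deriv p)"
  using sinh_r_p_nonzero[of p]
  unfolding r_p_deriv_def[abs_def] by (auto intro!: continuous_intros)

lemma norm_r_p_le:
  assumes "1 < p"
  shows "norm (r_p p x) \<le> 1 / sinh_bound_p p / exp (pi * \<bar>x\<bar>)"
proof -
  have pos: "0 < sinh_bound_p p * exp (pi * \<bar>x\<bar>)"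
    using sinh_bound_p_pos[OF assms] by simp
  have "norm (r_p p x)
      = 1 / norm (sinh (complex_of_real pi * (complex_of_real x + \<i> / complex_of_real p)))"
    by (simp add: r_p_def norm_divide)
  also have "\<dots> \<le> 1 / (sinh_bound_p p * exp (pi * \<bar>x\<bar>))"
    using norm_sinh_r_p_ge[OF assms, of x] pos by (intro frac_le) auto
  finally show ?thesis by simp
qed

lemma norm_r_p_deriv_le:
  assumes "1 < p"
  shows "norm (r_p_deriv p x) \<le> pi / (sinh_bound_p p)\<^sup>2 / exp (pi * \<bar>x\<bar>)"
proof -
  define c where "c = sinh_bound_p p"
  define E where "E = exp (pi * \<bar>x\<bar>)"
  define z where "z = complex_of_real pi * (complex_of_real x + \<i> / complex_of_real p)"
  have c: "0 < c" using sinh_bound_p_pos[OF assms] by (simp add: c_def)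
  have E: "0 < E" by (simp add: E_def)
  have S: "c * E \<le> norm (sinh z)"
    using norm_sinh_r_p_ge[OF assms, of x] by (simp add: c_def E_def z_def)
  have C: "norm (cosh z) \<le> E"
    using norm_cosh_le_exp_abs_Re[of z] by (simp add: E_def z_def abs_mult)
  have "norm (r_p_deriv p x) = pi * norm (cosh z) / (norm (sinh z))\<^sup>2"
    by (simp add: r_p_deriv_def z_def norm_divide norm_mult norm_power)
  also have "\<dots> \<le> pi * E / (c * E)\<^sup>2"
    using S C c E by (intro frac_le mult_left_mono power_mono) auto
  also have "\<dots> = pi / c\<^sup>2 / E"
    using E by (simp add: power2_eq_square field_simps)
  finally show ?thesis by (simp add: c_def E_def)
qed

lemma r_p_decay:
  assumes "1 < p"
  obtains A where "decay_bound A (r_p p)" and "decay_bound A (r_p_deriv p)"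
proof -
  define c where "c = sinh_bound_p p"
  define A where "A = 1 / c + pi / c\<^sup>2"
  have c: "0 < c" using sinh_bound_p_pos[OF assms] by (simp add: c_def)
  have "1 / c / exp (pi * \<bar>x\<bar>) \<le> A / exp (pi * \<bar>x\<bar>)"
    and "pi / c\<^sup>2 / exp (pi * \<bar>x\<bar>) \<le> A / exp (pi * \<bar>x\<bar>)" for x
    using c by (intro divide_right_mono; simp add: A_def)+
  with norm_r_p_le[OF assms] norm_r_p_deriv_le[OF assms]
  have "norm (r_p p x) \<le> A / exp (pi * \<bar>x\<bar>)" and "norm (r_p_deriv p x) \<le> A / exp (pi * \<bar>x\<bar>)" for x
    unfolding c_def by (blast intro: order_trans)+
  then show ?thesis
    by (intro that[of "27 * A"] decay_bound_if_exp_decay)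
qed

section \<open>The exponent of a slowly oscillating shift\<close>

lemma SOS_image: "SOS \<alpha> \<Longrightarrow> \<alpha> ` {0<..} = {0<..}"
  unfolding SOS_def diffeo_pos_def bij_betw_def by blast

lemma SOS_derivative_bounds:
  assumes "SOS \<alpha>"
  obtains d C where "\<And>t. 0 < t \<Longrightarrow> (\<alpha> has_real_derivative d t) (at t)"
    and "\<And>t. 0 < t \<Longrightarrow> exp (- C) \<le> d t" and "\<And>t. 0 < t \<Longrightarrow> d t \<le> exp C"
proof -
  from assms obtain d where d: "\<And>t. 0 < t \<Longrightarrow> (\<alpha> has_real_derivative d t) (at t)"
    by (auto simp: SOS_def diffeo_pos_def C1_pos_def)
  from assms obtain C where C: "\<And>t. 0 < t \<Longrightarrow> \<bar>ln (deriv \<alpha> t)\<bar> \<le> C"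
    by (auto simp: SOS_def bounded_iff)
  have "0 < d t" and "\<bar>ln (d t)\<bar> \<le> C" if "0 < t" for t
    using assms C[OF that] DERIV_imp_deriv[OF d[OF that]] that by (auto simp: SOS_def)
  then have "exp (- C) \<le> d t" and "d t \<le> exp C" if "0 < t" for t
    using that by (metis abs_le_iff exp_le_cancel_iff exp_ln minus_le_iff)+
  with d show ?thesis by (rule that)
qed

lemma ratio_ge_if_derivative_ge:
  assumes d: "\<And>t. 0 < t \<Longrightarrow> (\<alpha> has_real_derivative d t) (at t)"
    and lower: "\<And>t. 0 < t \<Longrightarrow> m \<le> d t" and pos: "\<And>t. 0 < t \<Longrightarrow> 0 < \<alpha> t" and t: "0 < t"
  shows "m / 2 \<le> \<alpha> t / t"
proof -
  obtain z where z: "t / 2 < z" "z < t" "\<alpha> t - \<alpha> (t / 2) = (t - t / 2) * d z"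
    using MVT2[of "t / 2" t \<alpha> d] d t by force
  have "\<alpha> t = \<alpha> (t / 2) + t * d z / 2" using z(3) by (simp add: field_simps)
  moreover have "t * m \<le> t * d z" using lower[of z] z t by (intro mult_left_mono) auto
  ultimately have "t * m / 2 \<le> \<alpha> t" using pos[of "t / 2"] t by linarith
  then show ?thesis using t by (simp add: field_simps)
qed

lemma ratio_le_if_derivative_le:
  assumes d: "\<And>t. 0 < t \<Longrightarrow> (\<alpha> has_real_derivative d t) (at t)"
    and upper: "\<And>t. 0 < t \<Longrightarrow> d t \<le> M" and M: "0 \<le> M"
    and onto: "{0<..} \<subseteq> \<alpha> ` {0<..}" and mono: "mono_on {0<..} \<alpha>" and t: "0 < t"
  shows "\<alpha> t / t \<le> 1 + M"
proof -
  \<comment> \<open>Compare with a preimage \<open>u\<close> of \<open>t\<close>: either \<open>t \<le> u\<close> and \<open>\<alpha> t \<le> \<alpha> u = t\<close>,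
    or \<open>u < t\<close> and the mean value theorem on \<open>[u, t]\<close> bounds \<open>\<alpha> t - t\<close>.\<close>
  obtain u where u: "0 < u" "\<alpha> u = t" using onto t by auto
  have "\<alpha> t \<le> t + t * M"
  proof (cases "t \<le> u")
    case True
    from mono_onD[OF mono _ _ True] t u have "\<alpha> t \<le> t" by simp
    moreover have "0 \<le> t * M" using M t by simp
    ultimately show ?thesis by linarith
  next
    case False
    then obtain z where z: "u < z" "z < t" "\<alpha> t - \<alpha> u = (t - u) * d z"
      using MVT2[of u t \<alpha> d] d u by force
    have "(t - u) * d z \<le> (t - u) * M" using upper[of z] z u by (intro mult_left_mono) auto
    also have "\<dots> \<le> t * M" using u M by (intro mult_right_mono) auto
    finally have "(t - u) * d z \<le> t * M" .
    with z u show ?thesis by simp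
  qed
  then show ?thesis using t by (simp add: field_simps)
qed

lemma SOS_exponent_bounded:
  assumes "SOS \<alpha>"
  obtains W where "\<And>t. 0 < t \<Longrightarrow> \<bar>ln (\<alpha> t / t)\<bar> \<le> W"
proof -
  obtain d C where d: "\<And>t. 0 < t \<Longrightarrow> (\<alpha> has_real_derivative d t) (at t)"
    and lower: "\<And>t. 0 < t \<Longrightarrow> exp (- C) \<le> d t" and upper: "\<And>t. 0 < t \<Longrightarrow> d t \<le> exp C"
    by (rule SOS_derivative_bounds[OF assms]) blast
  have pos: "0 < \<alpha> t" if "0 < t" for t using SOS_image[OF assms] that by auto
  have mono: "mono_on {0<..} \<alpha>"
    using assms by (simp add: SOS_def strict_mono_on_imp_mono_on)
  have "\<bar>ln (\<alpha> t / t)\<bar> \<le> \<bar>ln (exp (- C) / 2)\<bar> + \<bar>ln (1 + exp C)\<bar>" if t: "0 < t" for t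
  proof -
    have ge: "exp (- C) / 2 \<le> \<alpha> t / t" by (rule ratio_ge_if_derivative_ge[OF d lower pos t])
    have le: "\<alpha> t / t \<le> 1 + exp C"
      using SOS_image[OF assms] by (intro ratio_le_if_derivative_le[OF d upper _ _ mono t]) auto
    have "ln (exp (- C) / 2) \<le> ln (\<alpha> t / t)" using ge by (rule ln_mono) simp
    moreover have "ln (\<alpha> t / t) \<le> ln (1 + exp C)"
      using le by (rule ln_mono) (use ge exp_gt_zero[of "- C"] in \<open>linarith\<close>)
    ultimately show ?thesis by linarith
  qed
  then show ?thesis by (rule that)
qed

lemma SOS_exponent_continuous:
  assumes "SOS \<alpha>"
  shows "continuous_on {0<..} (\<lambda>t. ln (\<alpha> t / t))"
proof -
  obtain d C where d: "\<And>t. 0 < t \<Longrightarrow> (\<alpha> has_real_derivative d t) (at t)"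
    and "\<And>t. 0 < t \<Longrightarrow> exp (- C) \<le> d t" and "\<And>t. 0 < t \<Longrightarrow> d t \<le> exp C"
    by (rule SOS_derivative_bounds[OF assms]) blast
  have "isCont (\<lambda>s. ln (\<alpha> s / s)) t" if t: "0 < t" for t
  proof -
    have "isCont \<alpha> t" using d[OF t] by (rule DERIV_isCont)
    moreover have "0 < \<alpha> t" using SOS_image[OF assms] t by auto
    ultimately show ?thesis using t by (auto intro!: continuous_intros)
  qed
  then show ?thesis by (intro continuous_at_imp_continuous_on) auto
qed

theorem lemma7p3:
  fixes p :: real and \<alpha> :: "real \<Rightarrow> real" and \<omega> :: "real \<Rightarrow> real"
  assumes "1 < p" and "SOS \<alpha>"
    and "\<And>t. 0 < t \<Longrightarrow> \<omega> t = ln (\<alpha> t / t)"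
  shows "in_Cb_V (\<lambda>t x. exp (\<i> * complex_of_real (\<omega> t) * (complex_of_real x + \<i> / complex_of_real p))
                       * r_p p x)"
proof -
  have p: "1 \<le> p" using assms(1) by simp
  obtain W where "\<And>t. 0 < t \<Longrightarrow> \<bar>ln (\<alpha> t / t)\<bar> \<le> W"
    by (rule SOS_exponent_bounded[OF assms(2)]) blast
  then have W: "\<And>t. 0 < t \<Longrightarrow> \<bar>\<omega> t\<bar> \<le> W" using assms(3) by simp
  have cont: "continuous_on {0<..} \<omega>"
    using SOS_exponent_continuous[OF assms(2)] by (rule continuous_on_eq) (simp add: assms(3))
  obtain A where r: "decay_bound A (r_p p)" and r': "decay_bound A (r_p_deriv p)"
    by (rule r_p_decay[OF assms(1)]) blast
  note r_p' = r_p_has_derivative[OF assms(1)] continuous_on_r_p_deriv[OF assms(1)]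
  have "in_Cb_V (\<lambda>t x. e_p p (\<omega> t) x * r_p p x)"
  proof (rule in_Cb_V_compose[OF W cont])
    fix w assume "\<bar>w\<bar> \<le> W"
    from in_V_e_p_mult[OF p this r_p' r r'] V_norm_e_p_mult_le[OF p this r_p' r r']
    show "in_V (\<lambda>x. e_p p w x * r_p p x)"
      and "V_norm (\<lambda>x. e_p p w x * r_p p x) \<le> exp W * A + pi * (exp W * (W + 1) * A)" .
  next
    fix w1 w2 assume "\<bar>w1\<bar> \<le> W" "\<bar>w2\<bar> \<le> W"
    from V_norm_e_p_mult_diff_le[OF p this r_p' r r']
    show "V_norm (\<lambda>x. e_p p w1 x * r_p p x - e_p p w2 x * r_p p x)
      \<le> exp W * A * (1 + pi * (W + 2)) * \<bar>w1 - w2\<bar>" .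
  qed
  then show ?thesis by (simp add: e_p_def)
qed

end
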